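(* Let $\mathcal{M}$ be a CTMC with states $s_1,\dots,s_n$ ($n=|S|$), $s_1$ the initial state, $E(s)=1$ for all states, and $s_n=g$ a unique absorbing goal state; let $\delta>0$, $c=e^{\delta}$, $\mathcal{M}'=c\cdot\mathcal{M}$, $t\geq0$. Suppose the transition probability matrix is diagonalizable, $\mathbf{P}=\mathbf{S}\mathbf{D}\mathbf{S}^{-1}$, as below. Then $$\left|\mathrm{Pr}^{\mathcal{M}'}(\lozenge^{\leq t}g)-\mathrm{Pr}^{\mathcal{M}}(\lozenge^{\leq t}g)\right|\leq(n-a_{\mathbf{P}})\cdot C\cdot\sum_{k=1}^{\infty}|\lambda|^{k-1}\cdot\mathrm{Diff}_t(\mathcal{E}_k),$$ where $C=\max_{i=a_{\mathbf{P}}+1,\dots,n}\left|\mathbf{S}_{1,i}\cdot\mathbf{S}^{-1}_{i,n}\cdot(\lambda_i-1)\right|$.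
   Context: In a CTMC the process stays in $s$ an exponential time with rate $E(s)$, then jumps to $s'$ with probability $P(s,s')$; $c\cdot\mathcal{M}$ multiplies all exit rates by $c$; $\mathrm{Pr}^{\mathcal{M}}(\lozenge^{\leq t}g)$ is the probability of reaching $g$ from the initial state within time $t$. Standing assumption: states from which $g$ is unreachable are collapsed into a single absorbing fail state, so $\mathcal{M}$ has at most two absorbing states, one of which is reached almost surely. $\mathbf{P}_{i,j}=P(s_i,s_j)$; $a_{\mathbf{P}}\in\{1,2\}$ is the multiplicity of eigenvalue $1$ of $\mathbf{P}$. $\mathbf{D}$ is diagonal with diagonal entries $\lambda_1,\dots,\lambda_n$, the eigenvalues of $\mathbf{P}$ repeated according to multiplicity, in descending order of modulus, so $\lambda_1=\dots=\lambda_{a_{\mathbf{P}}}=1$; $\mathbf{S}$ is invertible. $\lambda$ denotes the eigenvalue of second largest modulus, $\lambda=\lambda_{a_{\mathbf{P}}+1}$. The Erlang CTMC $\mathcal{E}_k$ has states $s_0,\dots,s_{k-1},g$, initial state $s_0$, all exit rates $1$, a deterministic chain $s_0\to s_1\to\dots\to s_{k-1}\to g$ with $g$ absorbing and labeled differently from the equally labeled others; $\mathrm{Diff}_t(\mathcal{E}_k)=|\mathrm{Pr}^{\mathcal{E}_k}(\lozenge^{\leq t}g)-\mathrm{Pr}^{c\cdot\mathcal{E}_k}(\lozenge^{\leq t}g)|$. *)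

theory Defs
  imports "Jordan_Normal_Form.Char_Poly"
begin

text \<open>States are indexed 0,...,n-1 (paper's s_1,...,s_n are 0,...,n-1).
  A CTMC on n states is given by exit rates E and an embedded transition
  probability matrix P (a real n x n matrix).\<close>

definition make_absorbing :: "nat \<Rightarrow> real mat \<Rightarrow> nat \<Rightarrow> real mat" where
  "make_absorbing n P g = mat n n (\<lambda>(i,j). if i = g then (if j = g then 1 else 0) else P $$ (i,j))"

definition generator :: "nat \<Rightarrow> (nat \<Rightarrow> real) \<Rightarrow> real mat \<Rightarrow> real mat" where
  "generator n E P = mat n n (\<lambda>(i,j). E i * (P $$ (i,j) - (if i = j then 1 else 0)))"

definition mat_exp_entry :: "real mat \<Rightarrow> real \<Rightarrow> nat \<Rightarrow> nat \<Rightarrow> real" where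
  "mat_exp_entry Q t i j = (\<Sum>k. t ^ k / fact k * (Q ^\<^sub>m k) $$ (i,j))"

text \<open>Time-bounded reachability Pr(reach g within t) from initial state s0:
  probability of being in g at time t in the CTMC where g is made absorbing.\<close>
definition ctmc_reach :: "nat \<Rightarrow> (nat \<Rightarrow> real) \<Rightarrow> real mat \<Rightarrow> nat \<Rightarrow> nat \<Rightarrow> real \<Rightarrow> real" where
  "ctmc_reach n E P s0 g t = mat_exp_entry (generator n E (make_absorbing n P g)) t s0 g"

definition scale_rates :: "real \<Rightarrow> (nat \<Rightarrow> real) \<Rightarrow> nat \<Rightarrow> real" where
  "scale_rates c E = (\<lambda>s. c * E s)"

text \<open>Erlang CTMC E_k: states s_0..s_{k-1} are 0..k-1, goal g is k; rates 1.\<close>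
definition erlang_P :: "nat \<Rightarrow> real mat" where
  "erlang_P k = mat (Suc k) (Suc k) (\<lambda>(i,j). if (i < k \<and> j = Suc i) \<or> (i = k \<and> j = k) then 1 else 0)"

definition Diff_erlang :: "real \<Rightarrow> real \<Rightarrow> nat \<Rightarrow> real" where
  "Diff_erlang c t k = \<bar>ctmc_reach (Suc k) (\<lambda>_. 1) (erlang_P k) 0 k t
                        - ctmc_reach (Suc k) (scale_rates c (\<lambda>_. 1)) (erlang_P k) 0 k t\<bar>"

definition reachable :: "nat \<Rightarrow> real mat \<Rightarrow> nat \<Rightarrow> nat \<Rightarrow> bool" where
  "reachable n P i j \<longleftrightarrow> (i, j) \<in> {(a,b). a < n \<and> b < n \<and> P $$ (a,b) > 0}\<^sup>*"

end

theory Submission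
  imports Defs
begin

(* With all exit rates equal to r, uniformization expresses reachability within time t as
   sum_m Poisson(r t)(m) (P^m)_{1,g}, and the diagonalization P = S D S^-1 turns this into
   sum_i S_{1,i} S^-1_{i,g} exp (r t (lambda_i - 1)).  Summation by parts writes
   exp (s (z - 1)) - 1 = sum_j (z - 1) z^j T_s(j) for |z| <= 1, where T_s(j) is the probability
   that a Poisson(s) variable exceeds j; this is also the probability that the Erlang chain
   E_(j+1) with rate s/t reaches its goal by time t.  In the difference of the expansions for the
   rates c and 1 the eigenvalues 1 drop out, and each remaining term is at most
   C |lambda|^j Diff_t(E_(j+1)). *)

section \<open>Matrix powers\<close>

lemma index_mult_mat_sum:
  fixes A B :: "'a::comm_semiring_0 mat"
  assumes "A \<in> carrier_mat nr n" "B \<in> carrier_mat n nc" "i < nr" "j < nc"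
  shows "(A * B) $$ (i,j) = (\<Sum>r<n. A $$ (i,r) * B $$ (r,j))"
  using assms by (simp add: scalar_prod_def atLeast0LessThan)

lemma smult_pow_mat:
  fixes A :: "'a::comm_semiring_1 mat"
  assumes A: "A \<in> carrier_mat n n"
  shows "(r \<cdot>\<^sub>m A) ^\<^sub>m k = (r ^ k) \<cdot>\<^sub>m (A ^\<^sub>m k)"
proof (induction k)
  case 0
  then show ?case using A by (intro eq_matI) auto
next
  case (Suc k)
  have "(r \<cdot>\<^sub>m A) ^\<^sub>m Suc k = (r ^ k) \<cdot>\<^sub>m (A ^\<^sub>m k) * (r \<cdot>\<^sub>m A)"
    using Suc by simp
  also have "\<dots> = (r ^ Suc k) \<cdot>\<^sub>m (A ^\<^sub>m Suc k)"
    using A by (intro eq_matI) (auto simp: index_mult_mat_sum[of _ n n] sum_distrib_left ac_simps)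
  finally show ?case .
qed

lemma mult_diagonal_mat_entry:
  fixes A D :: "'a::comm_semiring_0 mat"
  assumes A: "A \<in> carrier_mat nr n" and D: "D \<in> carrier_mat n n" and diagonal: "diagonal_mat D"
    and i: "i < nr" and l: "l < n"
  shows "(A * D) $$ (i,l) = A $$ (i,l) * D $$ (l,l)"
proof -
  have "(A * D) $$ (i,l) = (\<Sum>r<n. A $$ (i,r) * D $$ (r,l))"
    by (rule index_mult_mat_sum[OF A D i l])
  also have "\<dots> = (\<Sum>r<n. if r = l then A $$ (i,l) * D $$ (l,l) else 0)"
    using D diagonal l by (intro sum.cong) (auto simp: diagonal_mat_def)
  also have "\<dots> = A $$ (i,l) * D $$ (l,l)"
    using l by simp
  finally show ?thesis .
qed

lemma diagonal_mat_pow_entry: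
  fixes D :: "'a::comm_semiring_1 mat"
  assumes D: "D \<in> carrier_mat n n" and diagonal: "diagonal_mat D" and k: "k < n" and l: "l < n"
  shows "(D ^\<^sub>m m) $$ (k,l) = (if k = l then D $$ (k,k) ^ m else 0)"
proof (induction m)
  case 0
  then show ?case using D k l by simp
next
  case (Suc m)
  then show ?case
    using mult_diagonal_mat_entry[OF pow_carrier_mat[OF D] D diagonal k l] by (simp add: mult.commute)
qed

lemma diagonal_mat_pow:
  fixes D :: "'a::comm_semiring_1 mat"
  assumes "D \<in> carrier_mat n n" and "diagonal_mat D"
  shows "diagonal_mat (D ^\<^sub>m m)"
  unfolding diagonal_mat_def using assms by (simp add: diagonal_mat_pow_entry[OF assms])

lemma similar_mat_wit_diagonal_pow_entry:
  fixes A :: "'a::comm_ring_1 mat"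
  assumes wit: "similar_mat_wit A D S Sinv" and diagonal: "diagonal_mat D"
    and A: "A \<in> carrier_mat n n" and i: "i < n" and j: "j < n"
  shows "(A ^\<^sub>m m) $$ (i,j) = (\<Sum>l<n. S $$ (i,l) * Sinv $$ (l,j) * D $$ (l,l) ^ m)"
proof -
  have carrier: "D \<in> carrier_mat n n" "S \<in> carrier_mat n n" "Sinv \<in> carrier_mat n n"
    using wit A by (auto simp: similar_mat_wit_def Let_def)
  have "(A ^\<^sub>m m) $$ (i,j) = (S * D ^\<^sub>m m * Sinv) $$ (i,j)"
    by (simp add: similar_mat_wit_pow_id[OF wit])
  also have "\<dots> = (\<Sum>l<n. (S * D ^\<^sub>m m) $$ (i,l) * Sinv $$ (l,j))"
    using carrier i j by (intro index_mult_mat_sum) auto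
  also have "\<dots> = (\<Sum>l<n. S $$ (i,l) * Sinv $$ (l,j) * D $$ (l,l) ^ m)"
    using carrier i
    by (intro sum.cong refl)
       (simp del: index_mult_mat
         add: mult_diagonal_mat_entry[OF _ _ diagonal_mat_pow[OF _ diagonal]] diagonal_mat_pow_entry[OF _ diagonal] mult_ac)
  finally show ?thesis .
qed

lemma similar_mat_wit_diagonal_eigenvector:
  fixes A :: "'a::comm_ring_1 mat"
  assumes wit: "similar_mat_wit A D S Sinv" and diagonal: "diagonal_mat D"
    and A: "A \<in> carrier_mat n n" and l: "l < n"
  shows "eigenvector A (col S l) (D $$ (l,l))"
proof -
  have carrier: "D \<in> carrier_mat n n" "S \<in> carrier_mat n n" "Sinv \<in> carrier_mat n n"
    and inverse: "Sinv * S = 1\<^sub>m n" and A_eq: "A = S * D * Sinv"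
    using wit A by (auto simp: similar_mat_wit_def Let_def)
  have "A * S = S * D * (Sinv * S)"
    using carrier by (simp add: A_eq assoc_mult_mat[of _ n n _ n _ n])
  then have AS: "A * S = S * D"
    using carrier by (simp add: inverse)
  have "A *\<^sub>v col S l = col (S * D) l"
    unfolding AS[symmetric] using carrier A l by (intro eq_vecI) auto
  also have "\<dots> = D $$ (l,l) \<cdot>\<^sub>v col S l"
  proof -
    have "row S i \<bullet> col D l = S $$ (i,l) * D $$ (l,l)" if "i < n" for i
      using mult_diagonal_mat_entry[OF carrier(2,1) diagonal that l] carrier that l by simp
    then show ?thesis
      using carrier l by (intro eq_vecI) (auto simp: mult.commute)
  qed
  finally have "A *\<^sub>v col S l = D $$ (l,l) \<cdot>\<^sub>v col S l" .
  moreover have "col S l \<noteq> 0\<^sub>v n"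
  proof
    assume "col S l = 0\<^sub>v n"
    then have "(Sinv * S) $$ (l,l) = 0"
      using carrier l by simp
    then show False
      using inverse l by simp
  qed
  ultimately show ?thesis
    using carrier A l by (simp add: eigenvector_def)
qed

lemma alternating_binomial_sum_Suc:
  fixes x :: "nat \<Rightarrow> 'a::comm_ring_1"
  shows "(\<Sum>l\<le>Suc k. of_nat (Suc k choose l) * (-1) ^ (Suc k - l) * x l)
    = (\<Sum>l\<le>k. of_nat (k choose l) * (-1) ^ (k - l) * (x (Suc l) - x l))"
proof -
  have "(\<Sum>l\<le>Suc k. of_nat (Suc k choose l) * (-1) ^ (Suc k - l) * x l)
      = (-1) ^ Suc k * x 0 + (\<Sum>l\<le>k. of_nat (k choose l) * (-1) ^ (k - l) * x (Suc l))
        + (\<Sum>l\<le>k. of_nat (k choose Suc l) * (-1) ^ (k - l) * x (Suc l))"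
    by (simp add: sum.atMost_Suc_shift sum.distrib algebra_simps del: sum.atMost_Suc)
  also have "(\<Sum>l\<le>k. of_nat (k choose Suc l) * (-1) ^ (k - l) * x (Suc l))
      = - (\<Sum>l<k. of_nat (k choose Suc l) * (-1) ^ (k - Suc l) * x (Suc l))"
  proof -
    have "(-1 :: 'a) ^ (k - l) = - ((-1) ^ (k - Suc l))" if "l < k" for l
      using that by (simp add: Suc_diff_Suc[symmetric])
    then show ?thesis
      by (simp add: lessThan_Suc_atMost[symmetric] sum_negf[symmetric] binomial_eq_0)
  qed
  also have "(\<Sum>l<k. of_nat (k choose Suc l) * (-1) ^ (k - Suc l) * x (Suc l))
      = (\<Sum>l\<le>k. of_nat (k choose l) * (-1) ^ (k - l) * x l) - (-1) ^ k * x 0"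
    by (cases k) (simp_all add: sum.atMost_Suc_shift lessThan_Suc_atMost del: sum.atMost_Suc)
  finally show ?thesis
    by (simp add: sum_subtractf algebra_simps)
qed

lemma minus_one_mat_pow_entry:
  fixes B :: "'a::comm_ring_1 mat"
  assumes B: "B \<in> carrier_mat n n" and i: "i < n" and j: "j < n"
  shows "((B - 1\<^sub>m n) ^\<^sub>m k) $$ (i,j) = (\<Sum>l\<le>k. of_nat (k choose l) * (-1) ^ (k - l) * (B ^\<^sub>m l) $$ (i,j))"
  using j
proof (induction k arbitrary: j)
  case 0
  then show ?case using B i by simp
next
  case (Suc k)
  let ?X = "(B - 1\<^sub>m n) ^\<^sub>m k"
  have X: "?X \<in> carrier_mat n n" using B by auto
  have "((B - 1\<^sub>m n) ^\<^sub>m Suc k) $$ (i,j) = (?X * B) $$ (i,j) - ?X $$ (i,j)"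
    using X B i Suc.prems by (simp add: mult_minus_distrib_mat[OF X B one_carrier_mat])
  also have "(?X * B) $$ (i,j) = (\<Sum>r<n. ?X $$ (i,r) * B $$ (r,j))"
    by (rule index_mult_mat_sum[OF X B i Suc.prems])
  also have "\<dots> = (\<Sum>l\<le>k. of_nat (k choose l) * (-1) ^ (k - l) * (\<Sum>r<n. (B ^\<^sub>m l) $$ (i,r) * B $$ (r,j)))"
    using Suc.IH by (simp add: sum_distrib_left sum_distrib_right sum.swap[of _ "{..<n}"] mult.assoc)
  also have "\<dots> = (\<Sum>l\<le>k. of_nat (k choose l) * (-1) ^ (k - l) * (B ^\<^sub>m Suc l) $$ (i,j))"
    using index_mult_mat_sum[OF pow_carrier_mat[OF B] B i Suc.prems] by simp
  finally show ?case
    unfolding alternating_binomial_sum_Suc Suc.IH[OF Suc.prems]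
    by (simp add: sum_subtractf algebra_simps)
qed

section \<open>Stochastic matrices\<close>

text \<open>A maximal-modulus entry of an eigenvector is a convex combination of entries of
  no larger modulus.\<close>

lemma stochastic_eigenvalue_norm_le_1:
  fixes P :: "real mat"
  assumes P: "P \<in> carrier_mat n n"
    and nonneg: "\<forall>i<n. \<forall>j<n. P $$ (i,j) \<ge> 0"
    and stochastic: "\<forall>i<n. (\<Sum>j<n. P $$ (i,j)) = 1"
    and eigenvector: "eigenvector (map_mat complex_of_real P) v k"
  shows "cmod k \<le> 1"
proof -
  have v: "v \<in> carrier_vec n" "v \<noteq> 0\<^sub>v n" and Pv: "map_mat complex_of_real P *\<^sub>v v = k \<cdot>\<^sub>v v"
    using eigenvector P by (auto simp: eigenvector_def)
  obtain i where i: "i < n" and v_i: "v $ i \<noteq> 0"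
    using v by (metis eq_vecI carrier_vecD index_zero_vec)
  define M where "M = Max ((\<lambda>j. cmod (v $ j)) ` {..<n})"
  have "M \<in> (\<lambda>j. cmod (v $ j)) ` {..<n}"
    unfolding M_def using i by (intro Max_in) auto
  then obtain m where m: "m < n" and M: "M = cmod (v $ m)"
    by auto
  have max: "cmod (v $ j) \<le> cmod (v $ m)" if "j < n" for j
    unfolding M[symmetric] M_def using that by (intro Max_ge) auto
  have "cmod k * cmod (v $ m) = cmod (\<Sum>j<n. of_real (P $$ (m,j)) * v $ j)"
    using arg_cong[OF Pv, of "\<lambda>x. x $ m"] P v m
    by (simp add: scalar_prod_def atLeast0LessThan norm_mult)
  also have "\<dots> \<le> (\<Sum>j<n. P $$ (m,j) * cmod (v $ m))"
    using nonneg m max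
    by (intro order_trans[OF norm_sum] sum_mono) (simp add: norm_mult mult_left_mono)
  also have "\<dots> = cmod (v $ m)"
    using stochastic m by (simp flip: sum_distrib_right)
  moreover have "cmod (v $ m) > 0"
    using max[OF i] v_i by (meson less_le_trans zero_less_norm_iff)
  ultimately show ?thesis
    by simp
qed

lemma stochastic_diagonalization_norm_le_1:
  fixes P :: "real mat"
  assumes P: "P \<in> carrier_mat n n"
    and nonneg: "\<forall>i<n. \<forall>j<n. P $$ (i,j) \<ge> 0"
    and stochastic: "\<forall>i<n. (\<Sum>j<n. P $$ (i,j)) = 1"
    and wit: "similar_mat_wit (map_mat complex_of_real P) D S Sinv" and diagonal: "diagonal_mat D"
    and l: "l < n"
  shows "cmod (D $$ (l,l)) \<le> 1"
proof (rule stochastic_eigenvalue_norm_le_1[OF P nonneg stochastic])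
  show "eigenvector (map_mat complex_of_real P) (col S l) (D $$ (l,l))"
    using P by (intro similar_mat_wit_diagonal_eigenvector[OF wit diagonal _ l]) simp
qed

lemma make_absorbing_stochastic:
  fixes P :: "real mat"
  assumes P: "P \<in> carrier_mat n n"
    and nonneg: "\<forall>i<n. \<forall>j<n. P $$ (i,j) \<ge> 0"
    and stochastic: "\<forall>i<n. (\<Sum>j<n. P $$ (i,j)) = 1"
    and g: "g < n" and absorbing: "P $$ (g,g) = 1"
  shows "make_absorbing n P g = P"
proof -
  have "(\<Sum>j\<in>{..<n} - {g}. P $$ (g,j)) = 0"
    using stochastic g absorbing sum.remove[of "{..<n}" g "\<lambda>j. P $$ (g,j)"] by simp
  then have "P $$ (g,j) = 0" if "j < n" "j \<noteq> g" for j
    using that nonneg g by (subst (asm) sum_nonneg_eq_0_iff) auto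
  then show ?thesis
    using P absorbing by (intro eq_matI) (auto simp: make_absorbing_def)
qed

section \<open>Poisson distribution\<close>

lemma exp_sums: "(\<lambda>m. x ^ m / fact m) sums exp (x :: 'a::{real_normed_field,banach})"
  using exp_converges[of x] by (simp add: divide_inverse scaleR_conv_of_real mult.commute)

definition poisson :: "real \<Rightarrow> nat \<Rightarrow> real" where
  "poisson s m = exp (- s) * s ^ m / fact m"

definition poisson_tail :: "real \<Rightarrow> nat \<Rightarrow> real" where
  "poisson_tail s j = 1 - (\<Sum>m\<le>j. poisson s m)"

lemma poisson_nonneg: "s \<ge> 0 \<Longrightarrow> poisson s m \<ge> 0"
  unfolding poisson_def by simp

lemma poisson_sums: "poisson s sums 1"
proof -
  have "(\<lambda>m. exp (- s) * (s ^ m / fact m)) sums (exp (- s) * exp s)"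
    by (rule sums_mult[OF exp_sums])
  moreover have "poisson s = (\<lambda>m. exp (- s) * (s ^ m / fact m))"
    by (simp add: poisson_def fun_eq_iff)
  ultimately show ?thesis
    by (simp add: exp_minus_inverse mult.commute)
qed

lemma poisson_generating_function:
  fixes z :: complex
  shows "(\<lambda>m. of_real (poisson s m) * z ^ m) sums exp (of_real s * (z - 1))"
proof -
  have "(\<lambda>m. exp (- of_real s) * ((of_real s * z) ^ m / fact m)) sums (exp (- of_real s) * exp (of_real s * z))"
    by (rule sums_mult[OF exp_sums])
  moreover have "of_real (poisson s m) * z ^ m = exp (- of_real s) * ((of_real s * z) ^ m / fact m)" for m
    by (simp add: poisson_def power_mult_distrib exp_of_real[symmetric])
  moreover have "exp (- of_real s) * exp (of_real s * z) = exp (of_real s * (z - 1))"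
    by (simp add: exp_add[symmetric] algebra_simps)
  ultimately show ?thesis
    by simp
qed

lemma poisson_tail_sums: "(\<lambda>l. poisson s (l + Suc j)) sums poisson_tail s j"
proof -
  have "poisson s sums (poisson_tail s j + (\<Sum>m<Suc j. poisson s m))"
    using poisson_sums by (simp add: poisson_tail_def lessThan_Suc_atMost)
  then show ?thesis
    using sums_iff_shift by blast
qed

lemma poisson_tail_Suc: "poisson_tail s (Suc j) = poisson_tail s j - poisson s (Suc j)"
  by (simp add: poisson_tail_def)

lemma poisson_tail_nonneg: "s \<ge> 0 \<Longrightarrow> poisson_tail s j \<ge> 0"
  using sums_le[OF _ sums_zero poisson_tail_sums] poisson_nonneg by fastforce

lemma poisson_tail_le:
  assumes s: "s \<ge> 0"
  shows "poisson_tail s j \<le> s ^ Suc j / fact (Suc j)"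
proof -
  have "poisson s (l + Suc j) \<le> s ^ Suc j / fact (Suc j) * poisson s l" for l
  proof -
    have "fact l * fact (Suc j) \<le> (fact (l + Suc j) :: real)"
      by (metis fact_fact_dvd_fact dvd_imp_le fact_gt_zero of_nat_fact of_nat_le_iff of_nat_mult)
    then have "exp (- s) * s ^ l * s ^ Suc j / fact (l + Suc j)
        \<le> exp (- s) * s ^ l * s ^ Suc j / (fact l * fact (Suc j))"
      using s by (intro divide_left_mono) auto
    then show ?thesis
      by (simp add: poisson_def power_add field_simps)
  qed
  moreover have "(\<lambda>l. s ^ Suc j / fact (Suc j) * poisson s l) sums (s ^ Suc j / fact (Suc j) * 1)"
    by (rule sums_mult[OF poisson_sums])
  ultimately show ?thesis
    using sums_le[OF _ poisson_tail_sums] by fastforce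
qed

lemma summable_poisson_tail:
  assumes "s \<ge> 0"
  shows "summable (poisson_tail s)"
proof (rule summable_comparison_test)
  show "\<exists>N. \<forall>j\<ge>N. norm (poisson_tail s j) \<le> s ^ Suc j / fact (Suc j)"
    using poisson_tail_nonneg[OF assms] poisson_tail_le[OF assms] by auto
  show "summable (\<lambda>j. s ^ Suc j / fact (Suc j))"
    using summable_ignore_initial_segment[OF sums_summable[OF exp_sums], of s 1] by simp
qed

lemma poisson_tail_tendsto_0: "poisson_tail s \<longlonglongrightarrow> 0"
proof -
  have "(\<lambda>j. \<Sum>m\<le>j. poisson s m) \<longlonglongrightarrow> 1"
    using summable_LIMSEQ'[OF sums_summable[OF poisson_sums]] sums_unique[OF poisson_sums] by simp
  then have "(\<lambda>j. 1 - (\<Sum>m\<le>j. poisson s m)) \<longlonglongrightarrow> 1 - 1"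
    by (intro tendsto_diff tendsto_const)
  then show ?thesis
    by (simp add: poisson_tail_def[abs_def])
qed

text \<open>Summation by parts; the boundary term z^N T(N) vanishes because |z| \<le> 1 and T(N) \<rightarrow> 0.\<close>

lemma poisson_generating_function_tail_sums:
  fixes z :: complex
  assumes z: "cmod z \<le> 1"
  shows "(\<lambda>j. (z - 1) * z ^ j * of_real (poisson_tail s j)) sums (exp (of_real s * (z - 1)) - 1)"
proof -
  let ?p = "\<lambda>m. of_real (poisson s m) * z ^ m"
  let ?T = "\<lambda>j. complex_of_real (poisson_tail s j)"
  have partial: "(\<Sum>j<N. (z - 1) * z ^ j * ?T j) = (\<Sum>m\<le>N. ?p m) + z ^ N * ?T N - 1" for N
  proof (induction N)
    case 0
    then show ?case by (simp add: poisson_tail_def)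
  next
    case (Suc N)
    have "(\<Sum>j<Suc N. (z - 1) * z ^ j * ?T j) = (\<Sum>m\<le>N. ?p m) + z ^ Suc N * ?T N - 1"
      using Suc by (simp add: algebra_simps)
    also have "?T N = of_real (poisson s (Suc N)) + ?T (Suc N)"
      by (simp add: poisson_tail_Suc)
    finally show ?case
      by (simp add: algebra_simps)
  qed
  have "(\<lambda>N. \<Sum>m\<le>N. ?p m) \<longlonglongrightarrow> exp (of_real s * (z - 1))"
    using summable_LIMSEQ'[OF sums_summable[OF poisson_generating_function]]
      sums_unique[OF poisson_generating_function] by simp
  moreover have "(\<lambda>N. z ^ N * ?T N) \<longlonglongrightarrow> 0"
  proof (rule tendsto_0_le[OF poisson_tail_tendsto_0, where K = 1])
    have "norm (z ^ N * ?T N) \<le> norm (poisson_tail s N) * 1" for N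
      using z by (simp add: norm_mult norm_power mult_left_le_one_le power_le_one)
    then show "\<forall>\<^sub>F N in sequentially. norm (z ^ N * ?T N) \<le> norm (poisson_tail s N) * 1"
      by simp
  qed
  ultimately have "(\<lambda>N. (\<Sum>m\<le>N. ?p m) + z ^ N * ?T N - 1) \<longlonglongrightarrow> exp (of_real s * (z - 1)) + 0 - 1"
    by (intro tendsto_intros)
  then show ?thesis
    unfolding sums_def partial by simp
qed

lemma poisson_generating_function_diff_tail_sums:
  fixes z :: complex
  assumes "cmod z \<le> 1"
  shows "(\<lambda>j. (z - 1) * z ^ j * of_real (poisson_tail s' j - poisson_tail s j))
    sums (exp (of_real s' * (z - 1)) - exp (of_real s * (z - 1)))"
  using sums_diff[OF poisson_generating_function_tail_sums[OF assms, of s']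
                     poisson_generating_function_tail_sums[OF assms, of s]]
  by (simp add: algebra_simps)

section \<open>Uniformization\<close>

lemma generator_uniform_rate:
  assumes "A \<in> carrier_mat n n"
  shows "generator n (\<lambda>_. r) A = r \<cdot>\<^sub>m (A - 1\<^sub>m n)"
  unfolding generator_def using assms by (intro eq_matI) auto

text \<open>exp (r t (A - I)) = exp (- r t) exp (r t A), expanded entrywise as a
  Cauchy product.\<close>

lemma mat_exp_entry_uniform_rate_sums:
  assumes A: "A \<in> carrier_mat n n" and i: "i < n" and j: "j < n"
    and bounded: "\<And>m. \<bar>(A ^\<^sub>m m) $$ (i,j)\<bar> \<le> M"
  shows "(\<lambda>m. poisson (r * t) m * (A ^\<^sub>m m) $$ (i,j)) sums mat_exp_entry (generator n (\<lambda>_. r) A) t i j"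
proof -
  define s where "s = r * t"
  define a where "a l = s ^ l / fact l * (A ^\<^sub>m l) $$ (i,j)" for l
  define b where "b l = (- s) ^ l / fact l" for l
  have summable_abs_exp: "summable (\<lambda>l. \<bar>s\<bar> ^ l / fact l)"
    using exp_sums sums_summable by blast
  have "norm (norm (a l)) \<le> M * (\<bar>s\<bar> ^ l / fact l)" for l
  proof -
    have "norm (norm (a l)) = \<bar>s\<bar> ^ l / fact l * \<bar>(A ^\<^sub>m l) $$ (i,j)\<bar>"
      by (simp add: a_def abs_mult power_abs)
    also have "\<dots> \<le> \<bar>s\<bar> ^ l / fact l * M"
      by (intro mult_left_mono bounded) simp
    finally show ?thesis
      by (simp add: mult.commute)
  qed
  then have a: "summable (\<lambda>l. norm (a l))"
    by (intro summable_comparison_test[OF _ summable_mult[OF summable_abs_exp]]) blast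
  have b: "summable (\<lambda>l. norm (b l))"
    using summable_abs_exp by (simp add: b_def power_abs)
  have "(\<Sum>l\<le>k. a l * b (k - l)) = t ^ k / fact k * (generator n (\<lambda>_. r) A ^\<^sub>m k) $$ (i,j)" for k
  proof -
    have "t ^ k / fact k * (generator n (\<lambda>_. r) A ^\<^sub>m k) $$ (i,j)
        = s ^ k / fact k * ((A - 1\<^sub>m n) ^\<^sub>m k) $$ (i,j)"
      using A i j smult_pow_mat[of "A - 1\<^sub>m n" n r k]
      by (simp add: generator_uniform_rate s_def power_mult_distrib minus_carrier_mat)
    also have "\<dots> = (\<Sum>l\<le>k. s ^ k / fact k * of_nat (k choose l) * (-1) ^ (k - l) * (A ^\<^sub>m l) $$ (i,j))"
      by (simp add: minus_one_mat_pow_entry[OF A i j] sum_distrib_left mult.assoc)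
    also have "\<dots> = (\<Sum>l\<le>k. a l * b (k - l))"
    proof (rule sum.cong[OF refl])
      fix l assume "l \<in> {..k}"
      then have l: "l \<le> k" by simp
      have "s ^ k = s ^ l * s ^ (k - l)"
        using l by (simp add: power_add[symmetric])
      moreover have "(- s) ^ (k - l) = (-1) ^ (k - l) * s ^ (k - l)"
        by (rule power_minus)
      ultimately show "s ^ k / fact k * of_nat (k choose l) * (-1) ^ (k - l) * (A ^\<^sub>m l) $$ (i,j) = a l * b (k - l)"
        unfolding a_def b_def binomial_fact[OF l] by (simp add: field_simps)
    qed
    finally show ?thesis
      by (rule sym)
  qed
  then have "(\<lambda>k. t ^ k / fact k * (generator n (\<lambda>_. r) A ^\<^sub>m k) $$ (i,j)) sums (suminf a * suminf b)"
    using Cauchy_product_sums[OF a b] by simp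
  moreover have "suminf b = exp (- s)"
    unfolding b_def by (rule sums_unique[OF exp_sums, symmetric])
  ultimately have "mat_exp_entry (generator n (\<lambda>_. r) A) t i j = exp (- s) * suminf a"
    unfolding mat_exp_entry_def by (simp add: sums_iff mult.commute)
  moreover have "(\<lambda>m. exp (- s) * a m) sums (exp (- s) * suminf a)"
    using summable_norm_cancel[OF a] by (intro sums_mult summable_sums)
  moreover have "exp (- s) * a m = poisson (r * t) m * (A ^\<^sub>m m) $$ (i,j)" for m
    by (simp add: poisson_def a_def s_def)
  ultimately show ?thesis
    by simp
qed

lemma ctmc_reach_uniform_rate_spectral:
  fixes P :: "real mat"
  assumes P: "P \<in> carrier_mat n n"
    and nonneg: "\<forall>i<n. \<forall>j<n. P $$ (i,j) \<ge> 0"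
    and stochastic: "\<forall>i<n. (\<Sum>j<n. P $$ (i,j)) = 1"
    and s0: "s0 < n" and g: "g < n" and absorbing: "P $$ (g,g) = 1"
    and wit: "similar_mat_wit (map_mat complex_of_real P) D S Sinv" and diagonal: "diagonal_mat D"
  shows "of_real (ctmc_reach n (\<lambda>_. r) P s0 g t)
    = (\<Sum>l<n. S $$ (s0,l) * Sinv $$ (l,g) * exp (of_real (r * t) * (D $$ (l,l) - 1)))"
proof -
  define w where "w l = S $$ (s0,l) * Sinv $$ (l,g)" for l
  have spectral: "of_real ((P ^\<^sub>m m) $$ (s0,g)) = (\<Sum>l<n. w l * D $$ (l,l) ^ m)" for m
  proof -
    have "of_real ((P ^\<^sub>m m) $$ (s0,g)) = (map_mat complex_of_real P ^\<^sub>m m) $$ (s0,g)"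
      using P s0 g by (simp flip: of_real_hom.mat_hom_pow[OF P])
    also have "\<dots> = (\<Sum>l<n. w l * D $$ (l,l) ^ m)"
      using P s0 g by (simp add: similar_mat_wit_diagonal_pow_entry[OF wit diagonal] w_def)
    finally show ?thesis .
  qed
  have "\<bar>(P ^\<^sub>m m) $$ (s0,g)\<bar> \<le> (\<Sum>l<n. cmod (w l))" for m
  proof -
    have "\<bar>(P ^\<^sub>m m) $$ (s0,g)\<bar> \<le> (\<Sum>l<n. cmod (w l * D $$ (l,l) ^ m))"
      using norm_sum[of "\<lambda>l. w l * D $$ (l,l) ^ m" "{..<n}"] by (simp flip: spectral)
    also have "\<dots> \<le> (\<Sum>l<n. cmod (w l))"
      using stochastic_diagonalization_norm_le_1[OF P nonneg stochastic wit diagonal]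
      by (intro sum_mono) (simp add: norm_mult norm_power mult_left_le power_le_one)
    finally show ?thesis .
  qed
  then have "(\<lambda>m. poisson (r * t) m * (P ^\<^sub>m m) $$ (s0,g)) sums ctmc_reach n (\<lambda>_. r) P s0 g t"
    unfolding ctmc_reach_def make_absorbing_stochastic[OF P nonneg stochastic g absorbing]
    by (intro mat_exp_entry_uniform_rate_sums[OF P s0 g])
  then have "(\<lambda>m. complex_of_real (poisson (r * t) m * (P ^\<^sub>m m) $$ (s0,g)))
      sums of_real (ctmc_reach n (\<lambda>_. r) P s0 g t)"
    by (rule sums_of_real)
  moreover have "complex_of_real (poisson (r * t) m * (P ^\<^sub>m m) $$ (s0,g))
      = (\<Sum>l<n. w l * (of_real (poisson (r * t) m) * D $$ (l,l) ^ m))" for m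
    by (simp add: spectral sum_distrib_left mult_ac)
  ultimately have "(\<lambda>m. \<Sum>l<n. w l * (of_real (poisson (r * t) m) * D $$ (l,l) ^ m))
      sums of_real (ctmc_reach n (\<lambda>_. r) P s0 g t)"
    by simp
  moreover have "(\<lambda>m. \<Sum>l<n. w l * (of_real (poisson (r * t) m) * D $$ (l,l) ^ m))
      sums (\<Sum>l<n. w l * exp (of_real (r * t) * (D $$ (l,l) - 1)))"
    by (intro sums_sum sums_mult poisson_generating_function)
  ultimately show ?thesis
    unfolding w_def by (rule sums_unique2)
qed

section \<open>Erlang chains\<close>

lemma erlang_P_carrier: "erlang_P k \<in> carrier_mat (Suc k) (Suc k)"
  by (simp add: erlang_P_def)

lemma erlang_P_pow_entry:
  assumes "i \<le> k"
  shows "(erlang_P k ^\<^sub>m m) $$ (0,i) = (if i = min m k then 1 else 0)"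
  using assms
proof (induction m arbitrary: i)
  case 0
  then show ?case by (simp add: erlang_P_def)
next
  case (Suc m)
  have "(erlang_P k ^\<^sub>m Suc m) $$ (0,i) = (\<Sum>r<Suc k. (erlang_P k ^\<^sub>m m) $$ (0,r) * erlang_P k $$ (r,i))"
    using Suc.prems by (simp add: index_mult_mat_sum[OF pow_carrier_mat[OF erlang_P_carrier] erlang_P_carrier])
  also have "\<dots> = (\<Sum>r<Suc k. if r = min m k then erlang_P k $$ (r,i) else 0)"
    using Suc.IH by (intro sum.cong) auto
  also have "\<dots> = erlang_P k $$ (min m k, i)"
    by simp
  also have "\<dots> = (if i = min (Suc m) k then 1 else 0)"
    using Suc.prems by (auto simp: erlang_P_def min_def)
  finally show ?case .
qed

lemma ctmc_reach_erlang:
  "ctmc_reach (Suc (Suc j)) (\<lambda>_. r) (erlang_P (Suc j)) 0 (Suc j) t = poisson_tail (r * t) j"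
proof -
  let ?A = "erlang_P (Suc j)"
  have pow: "(?A ^\<^sub>m m) $$ (0, Suc j) = (if Suc j \<le> m then 1 else 0)" for m
    using erlang_P_pow_entry[of "Suc j" "Suc j" m] by auto
  have absorbing: "make_absorbing (Suc (Suc j)) ?A (Suc j) = ?A"
    by (intro eq_matI) (auto simp: make_absorbing_def erlang_P_def)
  have "(\<lambda>m. poisson (r * t) m * (?A ^\<^sub>m m) $$ (0, Suc j))
      sums ctmc_reach (Suc (Suc j)) (\<lambda>_. r) ?A 0 (Suc j) t"
    unfolding ctmc_reach_def absorbing
    by (rule mat_exp_entry_uniform_rate_sums[OF erlang_P_carrier, where M = 1]) (simp_all add: pow)
  moreover have "(\<lambda>m. poisson (r * t) m * (?A ^\<^sub>m m) $$ (0, Suc j)) sums poisson_tail (r * t) j"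
  proof -
    let ?f = "\<lambda>m. if Suc j \<le> m then poisson (r * t) m else 0"
    have "(\<lambda>l. ?f (l + Suc j)) sums poisson_tail (r * t) j"
      using poisson_tail_sums by simp
    then have "?f sums (poisson_tail (r * t) j + (\<Sum>m<Suc j. ?f m))"
      using sums_iff_shift by blast
    moreover have "(\<lambda>m. poisson (r * t) m * (?A ^\<^sub>m m) $$ (0, Suc j)) = ?f"
      by (simp add: pow fun_eq_iff)
    ultimately show ?thesis
      by simp
  qed
  ultimately show ?thesis
    by (rule sums_unique2)
qed

lemma Diff_erlang_Suc: "Diff_erlang c t (Suc j) = \<bar>poisson_tail t j - poisson_tail (c * t) j\<bar>"
  by (simp add: Diff_erlang_def scale_rates_def ctmc_reach_erlang)

lemma summable_Diff_erlang:
  assumes "0 \<le> L" "L \<le> 1" "t \<ge> 0" "c \<ge> 0"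
  shows "summable (\<lambda>j. L ^ j * Diff_erlang c t (Suc j))"
proof (rule summable_comparison_test)
  have "norm (L ^ j * Diff_erlang c t (Suc j)) \<le> poisson_tail t j + poisson_tail (c * t) j" for j
  proof -
    have "norm (L ^ j * Diff_erlang c t (Suc j)) = L ^ j * Diff_erlang c t (Suc j)"
      using assms by (simp add: Diff_erlang_def abs_mult)
    also have "\<dots> \<le> Diff_erlang c t (Suc j)"
      using assms by (intro mult_left_le_one_le) (auto simp: Diff_erlang_def power_le_one)
    also have "\<dots> \<le> poisson_tail t j + poisson_tail (c * t) j"
      using assms poisson_tail_nonneg[of t j] poisson_tail_nonneg[of "c * t" j]
      by (simp add: Diff_erlang_Suc)
    finally show ?thesis .
  qed
  then show "\<exists>N. \<forall>j\<ge>N. norm (L ^ j * Diff_erlang c t (Suc j)) \<le> poisson_tail t j + poisson_tail (c * t) j"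
    by blast
  show "summable (\<lambda>j. poisson_tail t j + poisson_tail (c * t) j)"
    using assms by (intro summable_add summable_poisson_tail) auto
qed

section \<open>The error bound\<close>

lemma norm_sum_power_series_le:
  fixes x z :: "'i \<Rightarrow> complex" and d :: "nat \<Rightarrow> real"
  assumes sums: "\<And>i. i \<in> I \<Longrightarrow> (\<lambda>j. x i * z i ^ j * of_real (d j)) sums U i"
    and x: "\<And>i. i \<in> I \<Longrightarrow> cmod (x i) \<le> C"
    and z: "\<And>i. i \<in> I \<Longrightarrow> cmod (z i) \<le> L"
    and summable: "summable (\<lambda>j. L ^ j * \<bar>d j\<bar>)"
  shows "cmod (\<Sum>i\<in>I. U i) \<le> real (card I) * C * (\<Sum>j. L ^ j * \<bar>d j\<bar>)"
proof -
  have "cmod (U i) \<le> C * (\<Sum>j. L ^ j * \<bar>d j\<bar>)" if i: "i \<in> I" for i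
  proof -
    have "0 \<le> C"
      using order_trans[OF norm_ge_zero x[OF i]] .
    then have bound: "norm (x i * z i ^ j * of_real (d j)) \<le> C * (L ^ j * \<bar>d j\<bar>)" for j
      using x[OF i] z[OF i] unfolding mult.assoc[symmetric]
      by (auto simp: norm_mult norm_power intro!: mult_right_mono mult_mono power_mono)
    then have summable_norm_terms: "summable (\<lambda>j. norm (x i * z i ^ j * of_real (d j)))"
      by (intro summable_comparison_test[OF _ summable_mult[OF summable]]) auto
    then have "cmod (U i) \<le> (\<Sum>j. norm (x i * z i ^ j * of_real (d j)))"
      using summable_norm sums_unique[OF sums[OF i]] by metis
    also have "\<dots> \<le> (\<Sum>j. C * (L ^ j * \<bar>d j\<bar>))"
      using bound summable_norm_terms summable_mult[OF summable] by (rule suminf_le)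
    finally show ?thesis
      using suminf_mult[OF summable] by simp
  qed
  then show ?thesis
    using norm_sum[of U I] sum_bounded_above[of I "\<lambda>i. cmod (U i)"] by fastforce
qed

lemma norm_sum_exp_rate_difference_le:
  fixes w z :: "'i \<Rightarrow> complex"
  assumes I: "finite I" and z: "\<And>i. i \<in> I \<Longrightarrow> cmod (z i) \<le> L"
    and L: "0 \<le> L" "L \<le> 1" and t: "t \<ge> 0" and c: "c \<ge> 0"
  shows "cmod (\<Sum>i\<in>I. w i * (exp (of_real (c * t) * (z i - 1)) - exp (of_real t * (z i - 1))))
    \<le> real (card I) * (MAX i\<in>I. cmod (w i * (z i - 1))) * (\<Sum>j. L ^ j * Diff_erlang c t (Suc j))"
proof -
  have Diff: "Diff_erlang c t (Suc j) = \<bar>poisson_tail (c * t) j - poisson_tail t j\<bar>" for j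
    by (simp add: Diff_erlang_Suc abs_minus_commute)
  show ?thesis
    unfolding Diff
  proof (rule norm_sum_power_series_le)
    fix i assume i: "i \<in> I"
    have "cmod (z i) \<le> 1"
      using z[OF i] L by simp
    from sums_mult[OF poisson_generating_function_diff_tail_sums[OF this, where s' = "c * t" and s = t], of "w i"]
    show "(\<lambda>j. w i * (z i - 1) * z i ^ j * of_real (poisson_tail (c * t) j - poisson_tail t j))
        sums (w i * (exp (of_real (c * t) * (z i - 1)) - exp (of_real t * (z i - 1))))"
      by (simp add: mult_ac)
    show "cmod (w i * (z i - 1)) \<le> (MAX i\<in>I. cmod (w i * (z i - 1)))"
      using I i by (intro Max_ge) auto
  next
    show "summable (\<lambda>j. L ^ j * \<bar>poisson_tail (c * t) j - poisson_tail t j\<bar>)"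
      using summable_Diff_erlang[OF L t c] by (simp add: Diff)
  qed (use z in auto)
qed

theorem proposition7:
  fixes n :: nat and P :: "real mat" and S Sinv D :: "complex mat"
    and \<delta> t :: real
  defines "g \<equiv> n - 1"
    and "c \<equiv> exp \<delta>"
    and "lam \<equiv> (\<lambda>i. D $$ (i,i))"
    and "a \<equiv> order 1 (char_poly (map_mat complex_of_real P))"
  assumes n: "n \<ge> 1"
    and P: "P \<in> carrier_mat n n"
    and P_nonneg: "\<forall>i<n. \<forall>j<n. P $$ (i,j) \<ge> 0"
    and P_stoch: "\<forall>i<n. (\<Sum>j<n. P $$ (i,j)) = 1"
    and g_abs: "P $$ (g,g) = 1"
    and fail_abs: "\<forall>s<n. \<not> reachable n P s g \<longrightarrow> P $$ (s,s) = 1"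
    and fail_unique: "card {s. s < n \<and> \<not> reachable n P s g} \<le> 1"
    and S: "S \<in> carrier_mat n n" and Sinv: "Sinv \<in> carrier_mat n n"
    and D: "D \<in> carrier_mat n n" and D_diag: "diagonal_mat D"
    and S_inv1: "S * Sinv = 1\<^sub>m n" and S_inv2: "Sinv * S = 1\<^sub>m n"
    and diag: "map_mat complex_of_real P = S * D * Sinv"
    and sorted: "\<forall>i j. i \<le> j \<and> j < n \<longrightarrow> cmod (lam j) \<le> cmod (lam i)"
    and ones: "\<forall>i<a. lam i = 1"
    and \<delta>: "\<delta> > 0" and t: "t \<ge> 0"
  shows "\<bar>ctmc_reach n (scale_rates c (\<lambda>_. 1)) P 0 g t - ctmc_reach n (\<lambda>_. 1) P 0 g t\<bar>
    \<le> real (n - a) * (MAX i\<in>{a..<n}. cmod (S $$ (0,i) * Sinv $$ (i,g) * (lam i - 1)))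
        * (\<Sum>k. cmod (lam a) ^ k * Diff_erlang c t (Suc k))"
proof -
  have g: "g < n" and s0: "0 < n"
    using n by (auto simp: g_def)
  have wit: "similar_mat_wit (map_mat complex_of_real P) D S Sinv"
    using P S Sinv D S_inv1 S_inv2 diag by (auto simp: similar_mat_wit_def Let_def)
  define U where "U i = S $$ (0,i) * Sinv $$ (i,g)
    * (exp (of_real (c * t) * (lam i - 1)) - exp (of_real t * (lam i - 1)))" for i
  have "complex_of_real (ctmc_reach n (scale_rates c (\<lambda>_. 1)) P 0 g t - ctmc_reach n (\<lambda>_. 1) P 0 g t)
      = (\<Sum>i<n. U i)"
    using ctmc_reach_uniform_rate_spectral[OF P P_nonneg P_stoch s0 g g_abs wit D_diag]
    by (simp add: scale_rates_def U_def lam_def sum_subtractf right_diff_distrib)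
  also have "\<dots> = (\<Sum>i\<in>{a..<n}. U i)"
    using ones by (intro sum.mono_neutral_right) (auto simp: U_def)
  finally have difference: "\<bar>ctmc_reach n (scale_rates c (\<lambda>_. 1)) P 0 g t - ctmc_reach n (\<lambda>_. 1) P 0 g t\<bar>
      = cmod (\<Sum>i\<in>{a..<n}. U i)"
    by (metis norm_of_real)
  show ?thesis
  proof (cases "a < n")
    case True
    have "cmod (lam a) \<le> 1"
      unfolding lam_def using True by (rule stochastic_diagonalization_norm_le_1[OF P P_nonneg P_stoch wit D_diag])
    with sorted t show ?thesis
      unfolding difference U_def card_atLeastLessThan[symmetric]
      by (intro norm_sum_exp_rate_difference_le[where w = "\<lambda>i. S $$ (0,i) * Sinv $$ (i,g)"])
         (auto simp: c_def)
  qed (simp add: difference)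
qed

end
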